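(* Let $T$ be a tree and $S\subseteq E(T)$. Then \[ d(T\setminus S,X)=\sum_{\mu\in\mathcal{V}_1(S)} d(T\setminus V(\mu),X), \] where $\mathcal{V}_1(S)$ is the set of matchings (including the empty matching) of the subgraph of $T$ formed by the edges in $S$.
   Context: For a graph $G$ with vertex set $V$, $L(G,X_G)$ is the matrix indexed by $V$ with diagonal entries $x_u$ and off-diagonal entries $-m_{uv}$ ($m_{uv}$ the number of edges between $u$ and $v$), and $d(G,X)=\det L(G,X_G)$ (equal to $1$ for the graph with no vertices). $T\setminus S$ denotes $T$ with the edges in $S$ deleted (all vertices kept); $T\setminus V(\mu)$ denotes $T$ with the vertices covered by $\mu$ (and their incident edges) deleted. A matching is a set of pairwise vertex-disjoint edges. *)

theory Defs
  imports "HOL-Combinatorics.Permutations"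
begin

text \<open>Simple graphs: finite vertex set V, edge set E of 2-element subsets of V.
  (A tree is a simple graph, so edge multiplicities are 0 or 1.)\<close>

definition simple_graph :: "'a set \<Rightarrow> 'a set set \<Rightarrow> bool" where
  "simple_graph V E \<longleftrightarrow> finite V \<and> (\<forall>e\<in>E. \<exists>u v. e = {u, v} \<and> u \<noteq> v \<and> u \<in> V \<and> v \<in> V)"

definition adj :: "'a set set \<Rightarrow> 'a \<Rightarrow> 'a \<Rightarrow> bool" where
  "adj E u v \<longleftrightarrow> {u, v} \<in> E \<and> u \<noteq> v"

definition connected_graph :: "'a set \<Rightarrow> 'a set set \<Rightarrow> bool" where
  "connected_graph V E \<longleftrightarrow> (\<forall>u\<in>V. \<forall>v\<in>V. (adj E)\<^sup>*\<^sup>* u v)"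

definition is_cycle :: "'a set set \<Rightarrow> 'a list \<Rightarrow> bool" where
  "is_cycle E cs \<longleftrightarrow> length cs \<ge> 3 \<and> distinct cs \<and>
     (\<forall>i. Suc i < length cs \<longrightarrow> adj E (cs ! i) (cs ! Suc i)) \<and> adj E (last cs) (hd cs)"

definition is_tree :: "'a set \<Rightarrow> 'a set set \<Rightarrow> bool" where
  "is_tree V E \<longleftrightarrow> simple_graph V E \<and> V \<noteq> {} \<and> connected_graph V E \<and> (\<nexists>cs. is_cycle E cs)"

definition det_on :: "'a set \<Rightarrow> ('a \<Rightarrow> 'a \<Rightarrow> 'r::comm_ring_1) \<Rightarrow> 'r" where
  "det_on I M = (\<Sum>p | p permutes I. of_int (sign p) * (\<Prod>u\<in>I. M u (p u)))"

text \<open>L(G,X_G): diagonal x_u, off-diagonal -m_uv (m_uv = number of edges between u and v).\<close>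
definition Lmat :: "'a set set \<Rightarrow> ('a \<Rightarrow> 'r::comm_ring_1) \<Rightarrow> 'a \<Rightarrow> 'a \<Rightarrow> 'r" where
  "Lmat E x u v = (if u = v then x u else - (if {u, v} \<in> E then 1 else 0))"

definition dpoly :: "'a set \<Rightarrow> 'a set set \<Rightarrow> ('a \<Rightarrow> 'r::comm_ring_1) \<Rightarrow> 'r" where
  "dpoly V E x = det_on V (Lmat E x)"

definition is_matching :: "'a set set \<Rightarrow> bool" where
  "is_matching M \<longleftrightarrow> (\<forall>e\<in>M. \<forall>f\<in>M. e \<noteq> f \<longrightarrow> e \<inter> f = {})"

definition del_vertices_V :: "'a set \<Rightarrow> 'a set set \<Rightarrow> 'a set" where
  "del_vertices_V V M = V - \<Union>M"

definition del_vertices_E :: "'a set set \<Rightarrow> 'a set set \<Rightarrow> 'a set set" where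
  "del_vertices_E E M = {e \<in> E. e \<inter> \<Union>M = {}}"

end

theory Submission imports Defs "HOL-Combinatorics.Orbits"
begin

text \<open>Write \<open>d(G)\<close> for \<open>det L(G, X)\<close>. In the Leibniz expansion of \<open>d(G)\<close> a permutation
  contributes only if it moves every vertex along an edge; when \<open>G\<close> is a forest such a
  permutation cannot have a cycle of length \<open>\<ge> 3\<close>, since its orbit would be a cycle of \<open>G\<close>,
  so it is a product of disjoint edge transpositions. Deleting an edge \<open>uv\<close> therefore kills
  exactly the terms containing the transposition \<open>(u v)\<close>, whose sum is \<open>-d(G - u - v)\<close>:
  \<open>d(G - uv) = d(G) + d(G - u - v)\<close>. Deleting the edges of \<open>S\<close> one at a time and splitting
  the matchings of \<open>S\<close> according to whether they contain the current edge gives the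
  theorem by induction on \<open>S\<close>.\<close>

lemma det_on_cong:
  assumes "\<And>u v. u \<in> I \<Longrightarrow> v \<in> I \<Longrightarrow> M u v = M' u v"
  shows "det_on I M = det_on I M'"
  unfolding det_on_def
proof (rule sum.cong[OF refl])
  fix p assume "p \<in> {p. p permutes I}"
  then show "of_int (sign p) * (\<Prod>u\<in>I. M u (p u)) = of_int (sign p) * (\<Prod>u\<in>I. M' u (p u))"
    using assms permutes_in_image[of p I] by (intro arg_cong2[where f="(*)"] refl prod.cong) auto
qed

lemma simple_graph_finite_edges:
  assumes "simple_graph V E"
  shows "finite E"
proof -
  have "finite V" and "E \<subseteq> Pow V"
    using assms unfolding simple_graph_def by auto
  then show ?thesis
    by (meson finite_Pow_iff finite_subset)
qed

lemma is_cycle_mono: "is_cycle E' cs \<Longrightarrow> E' \<subseteq> E \<Longrightarrow> is_cycle E cs"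
  unfolding is_cycle_def adj_def by blast

lemma is_cycle_orbit:
  assumes perm: "permutation p" and long: "p (p a) \<noteq> a"
    and moves_along: "\<And>w. p w \<noteq> w \<Longrightarrow> {w, p w} \<in> E"
  shows "is_cycle E (map (\<lambda>i. (p ^^ i) a) [0..<funpow_dist1 p a a])"
proof -
  define k where "k = funpow_dist1 p a a"
  have orb: "a \<in> orbit p a"
    by (rule permutation_self_in_orbit[OF perm])
  have pk: "(p ^^ k) a = a"
    unfolding k_def by (rule funpow_dist1_prop[OF orb])
  have distinct_iterates: "(p ^^ m) a \<noteq> (p ^^ n) a" if "m < k" "n < k" "m \<noteq> n" for m n
    using funpow_neq_less_funpow_dist1[OF orb] that unfolding k_def by blast
  have "k \<noteq> 0"
    by (simp add: k_def)
  moreover have "k \<noteq> 1" "k \<noteq> 2"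
    using pk long by (auto simp: numeral_2_eq_2)
  ultimately have k3: "k \<ge> 3"
    by linarith
  have step: "adj E ((p ^^ i) a) ((p ^^ (Suc i mod k)) a)" if "i < k" for i
  proof -
    have next_eq: "(p ^^ (Suc i mod k)) a = p ((p ^^ i) a)"
      using pk \<open>i < k\<close> by (cases "Suc i = k") auto
    have "Suc i mod k < k" "Suc i mod k \<noteq> i"
      using \<open>i < k\<close> k3 by (auto simp: mod_Suc)
    then have "(p ^^ i) a \<noteq> p ((p ^^ i) a)"
      using distinct_iterates[OF that] next_eq by metis
    then show ?thesis
      using moves_along unfolding adj_def next_eq by simp
  qed
  show ?thesis
    unfolding is_cycle_def k_def[symmetric]
  proof (intro conjI allI impI)
    show "distinct (map (\<lambda>i. (p ^^ i) a) [0..<k])"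
      unfolding distinct_map using distinct_iterates by (auto intro!: inj_onI) metis
    show "adj E (map (\<lambda>i. (p ^^ i) a) [0..<k] ! i) (map (\<lambda>i. (p ^^ i) a) [0..<k] ! Suc i)"
      if "Suc i < length (map (\<lambda>i. (p ^^ i) a) [0..<k])" for i
      using step[of i] that by simp
    show "adj E (last (map (\<lambda>i. (p ^^ i) a) [0..<k])) (hd (map (\<lambda>i. (p ^^ i) a) [0..<k]))"
      using step[of "k - 1"] k3 by (simp add: last_map hd_map)
  qed (use k3 in simp)
qed

lemma permutation_along_acyclic_edges_involutive:
  assumes "permutation p" and "\<nexists>cs. is_cycle E cs"
    and "\<And>w. p w \<noteq> w \<Longrightarrow> {w, p w} \<in> E"
  shows "p (p a) = a"
  using is_cycle_orbit[of p a E] assms by blast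

lemma Lmat_term_nonzero_moves_along_edges:
  fixes x :: "'a \<Rightarrow> 'r::comm_ring_1"
  assumes "finite V" and "p permutes V" and "(\<Prod>w\<in>V. Lmat E x w (p w)) \<noteq> 0"
    and "p w \<noteq> w"
  shows "{w, p w} \<in> E"
proof (rule ccontr)
  assume "{w, p w} \<notin> E"
  then have "Lmat E x w (p w) = 0"
    using assms(4) by (simp add: Lmat_def)
  moreover have "w \<in> V"
    using assms(2,4) by (meson permutes_not_in)
  ultimately have "(\<Prod>w\<in>V. Lmat E x w (p w)) = 0"
    using assms(1) by (intro prod_zero) auto
  with assms(3) show False
    by contradiction
qed

lemma bij_betw_transpose_comp_permutes:
  assumes "u \<in> V" and "v \<in> V"
  shows "bij_betw (\<lambda>q. Transposition.transpose u v \<circ> q) {q. q permutes V - {u, v}}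
    {p. p permutes V \<and> p u = v \<and> p v = u}"
proof -
  let ?\<tau> = "Transposition.transpose u v"
  have \<tau>: "?\<tau> permutes V"
    using assms by (rule permutes_swap_id)
  have to_swapping: "?\<tau> \<circ> q \<in> {p. p permutes V \<and> p u = v \<and> p v = u}"
    if "q \<in> {q. q permutes V - {u, v}}" for q
  proof -
    from that have q: "q permutes V - {u, v}"
      by simp
    then have "q permutes V"
      by (rule permutes_subset) auto
    then have "?\<tau> \<circ> q permutes V"
      using \<tau> by (rule permutes_compose)
    moreover have "q u = u" "q v = v"
      using permutes_not_in[OF q] by auto
    ultimately show ?thesis
      by simp
  qed
  have from_swapping: "?\<tau> \<circ> p \<in> {q. q permutes V - {u, v}}"
    if "p \<in> {p. p permutes V \<and> p u = v \<and> p v = u}" for p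
  proof -
    from that have p: "p permutes V" "p u = v" "p v = u"
      by simp_all
    have "?\<tau> \<circ> p permutes V"
      using p(1) \<tau> by (rule permutes_compose)
    then have "?\<tau> \<circ> p permutes V - {u, v}"
      by (rule permutes_superset) (auto simp: p)
    then show ?thesis
      by simp
  qed
  have involutive: "?\<tau> \<circ> (?\<tau> \<circ> p) = p" for p
    by (simp add: comp_assoc[symmetric])
  show ?thesis
    by (rule bij_betw_byWitness[where f' = "\<lambda>p. ?\<tau> \<circ> p"])
      (use to_swapping from_swapping involutive in blast)+
qed

lemma sum_permutes_swapping:
  fixes M :: "'a \<Rightarrow> 'a \<Rightarrow> 'r::comm_ring_1"
  assumes fin: "finite V" and uv: "u \<in> V" "v \<in> V" "u \<noteq> v"
  shows "(\<Sum>p | p permutes V \<and> p u = v \<and> p v = u. of_int (sign p) * (\<Prod>w\<in>V. M w (p w)))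
       = - (M u v * M v u * det_on (V - {u, v}) M)"
proof -
  let ?\<tau> = "Transposition.transpose u v"
  have term_swap: "of_int (sign (?\<tau> \<circ> q)) * (\<Prod>w\<in>V. M w ((?\<tau> \<circ> q) w))
      = - (M u v * M v u * (of_int (sign q) * (\<Prod>w\<in>V - {u, v}. M w (q w))))"
    if q: "q permutes V - {u, v}" for q
  proof -
    have fix_uv: "q u = u" "q v = v"
      using permutes_not_in[OF q] by auto
    have "permutation q"
      using fin by (intro permutes_imp_permutation[OF _ q]) simp
    have "sign (?\<tau> \<circ> q) = - sign q"
      using sign_compose[OF permutation_swap_id \<open>permutation q\<close>, of u v] sign_swap_id[of u v] uv(3)
      by simp
    moreover have "(\<Prod>w\<in>V - {u, v}. M w ((?\<tau> \<circ> q) w)) = (\<Prod>w\<in>V - {u, v}. M w (q w))"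
    proof (rule prod.cong[OF refl])
      fix w assume "w \<in> V - {u, v}"
      then have "q w \<in> V - {u, v}"
        by (simp only: permutes_in_image[OF q])
      then show "M w ((?\<tau> \<circ> q) w) = M w (q w)"
        by simp
    qed
    moreover have "(\<Prod>w\<in>V. M w ((?\<tau> \<circ> q) w))
        = M u v * (M v u * (\<Prod>w\<in>V - {u, v}. M w ((?\<tau> \<circ> q) w)))"
      using fin uv fix_uv
      by (simp add: prod.remove[of V u] prod.remove[of "V - {u}" v] Diff_insert2[symmetric] insert_commute)
    ultimately show ?thesis
      by (simp add: algebra_simps)
  qed
  have "(\<Sum>p | p permutes V \<and> p u = v \<and> p v = u. of_int (sign p) * (\<Prod>w\<in>V. M w (p w)))
      = (\<Sum>q | q permutes V - {u, v}. of_int (sign (?\<tau> \<circ> q)) * (\<Prod>w\<in>V. M w ((?\<tau> \<circ> q) w)))"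
    by (rule sum.reindex_bij_betw[OF bij_betw_transpose_comp_permutes[OF uv(1,2)], symmetric])
  also have "\<dots> = (\<Sum>q | q permutes V - {u, v}.
      - (M u v * M v u * (of_int (sign q) * (\<Prod>w\<in>V - {u, v}. M w (q w)))))"
    by (rule sum.cong[OF refl], rule term_swap) simp
  also have "\<dots> = - (M u v * M v u * det_on (V - {u, v}) M)"
    by (simp add: det_on_def sum_negf sum_distrib_left)
  finally show ?thesis .
qed

lemma Lmat_term_delete_edge:
  fixes x :: "'a \<Rightarrow> 'r::comm_ring_1"
  assumes fin: "finite V" and acyclic: "\<nexists>cs. is_cycle E cs" and p: "p permutes V"
    and uv: "u \<noteq> v" "u \<in> V" "v \<in> V"
  shows "(\<Prod>w\<in>V. Lmat (E - {{u, v}}) x w (p w))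
    = (if p u = v \<and> p v = u then 0 else \<Prod>w\<in>V. Lmat E x w (p w))"
proof (cases "p u = v \<or> p v = u")
  case True
  have "Lmat (E - {{u, v}}) x u v = 0" "Lmat (E - {{u, v}}) x v u = 0"
    using uv(1) by (simp_all add: Lmat_def insert_commute)
  with True have "\<exists>w\<in>V. Lmat (E - {{u, v}}) x w (p w) = 0"
    using uv(2,3) by blast
  then have deleted_zero: "(\<Prod>w\<in>V. Lmat (E - {{u, v}}) x w (p w)) = 0"
    using fin by (intro prod_zero)
  have "(\<Prod>w\<in>V. Lmat E x w (p w)) = 0" if "\<not> (p u = v \<and> p v = u)"
  proof (rule ccontr)
    assume "(\<Prod>w\<in>V. Lmat E x w (p w)) \<noteq> 0"
    then have "{w, p w} \<in> E" if "p w \<noteq> w" for w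
      using Lmat_term_nonzero_moves_along_edges[OF fin p] that by blast
    moreover have "permutation p"
      using fin p by (rule permutes_imp_permutation)
    ultimately have "p (p a) = a" for a
      using permutation_along_acyclic_edges_involutive[OF _ acyclic] by blast
    with True \<open>\<not> (p u = v \<and> p v = u)\<close> show False
      by metis
  qed
  with deleted_zero show ?thesis
    by simp
next
  case False
  then have "Lmat (E - {{u, v}}) x w (p w) = Lmat E x w (p w)" for w
    by (auto simp: Lmat_def doubleton_eq_iff)
  with False show ?thesis
    by simp
qed

lemma det_on_Lmat_delete_edge:
  fixes x :: "'a \<Rightarrow> 'r::comm_ring_1"
  assumes fin: "finite V" and acyclic: "\<nexists>cs. is_cycle E cs"
    and uv: "{u, v} \<in> E" "u \<noteq> v" "u \<in> V" "v \<in> V"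
  shows "det_on V (Lmat (E - {{u, v}}) x) = det_on V (Lmat E x) + det_on (V - {u, v}) (Lmat E x)"
proof -
  define leibniz where "leibniz F p = of_int (sign p) * (\<Prod>w\<in>V. Lmat F x w (p w))" for F p
  let ?swaps = "\<lambda>p. p u = v \<and> p v = u"
  have "det_on V (Lmat E x)
      = (\<Sum>p | p permutes V. if ?swaps p then leibniz E p else 0) + det_on V (Lmat (E - {{u, v}}) x)"
    unfolding det_on_def leibniz_def[symmetric] sum.distrib[symmetric]
    by (rule sum.cong)
      (simp_all add: leibniz_def Lmat_term_delete_edge[OF fin acyclic _ uv(2-4)])
  also have "(\<Sum>p | p permutes V. if ?swaps p then leibniz E p else 0)
      = (\<Sum>p | p permutes V \<and> p u = v \<and> p v = u. leibniz E p)"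
    using sum.inter_filter[OF finite_permutations[OF fin], of "leibniz E" ?swaps] by simp
  also have "\<dots> = - det_on (V - {u, v}) (Lmat E x)"
  proof -
    have "Lmat E x u v = -1" "Lmat E x v u = -1"
      using uv(1,2) by (simp_all add: Lmat_def insert_commute)
    then show ?thesis
      using sum_permutes_swapping[OF fin uv(3,4,2), of "Lmat E x"] by (simp add: leibniz_def)
  qed
  finally show ?thesis
    by (simp add: algebra_simps)
qed

lemma det_on_Lmat_cong:
  assumes "\<And>a b. a \<in> I \<Longrightarrow> b \<in> I \<Longrightarrow> {a, b} \<in> E \<longleftrightarrow> {a, b} \<in> E'"
  shows "det_on I (Lmat E x) = det_on I (Lmat E' x)"
  using assms by (intro det_on_cong) (simp add: Lmat_def)

lemma simple_graph_remove_vertices: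
  assumes "simple_graph V S"
  shows "simple_graph (V - U) {f \<in> S. f \<inter> U = {}}"
  unfolding simple_graph_def
proof (intro conjI ballI)
  show "finite (V - U)"
    using assms by (simp add: simple_graph_def)
  fix f assume f: "f \<in> {f \<in> S. f \<inter> U = {}}"
  then have "f \<in> S"
    by simp
  then obtain a b where "f = {a, b}" "a \<noteq> b" "a \<in> V" "b \<in> V"
    using assms unfolding simple_graph_def by blast
  with f show "\<exists>a b. f = {a, b} \<and> a \<noteq> b \<and> a \<in> V - U \<and> b \<in> V - U"
    by auto
qed

lemma matchings_split:
  assumes "e \<in> S"
  shows "{\<mu>. \<mu> \<subseteq> S \<and> is_matching \<mu>} = {\<mu>. \<mu> \<subseteq> S - {e} \<and> is_matching \<mu>}
    \<union> insert e ` {\<mu>. \<mu> \<subseteq> {f \<in> S - {e}. f \<inter> e = {}} \<and> is_matching \<mu>}"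
proof (intro set_eqI iffI)
  fix \<mu> assume "\<mu> \<in> {\<mu>. \<mu> \<subseteq> S \<and> is_matching \<mu>}"
  then have \<mu>: "\<mu> \<subseteq> S" "is_matching \<mu>"
    by auto
  show "\<mu> \<in> {\<mu>. \<mu> \<subseteq> S - {e} \<and> is_matching \<mu>}
    \<union> insert e ` {\<mu>. \<mu> \<subseteq> {f \<in> S - {e}. f \<inter> e = {}} \<and> is_matching \<mu>}"
  proof (cases "e \<in> \<mu>")
    case False
    with \<mu> show ?thesis
      by auto
  next
    case True
    with \<mu> have "\<mu> - {e} \<in> {\<mu>. \<mu> \<subseteq> {f \<in> S - {e}. f \<inter> e = {}} \<and> is_matching \<mu>}"
      unfolding is_matching_def by blast
    moreover have "\<mu> = insert e (\<mu> - {e})"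
      using True by auto
    ultimately show ?thesis
      by blast
  qed
qed (use assms in \<open>auto simp: is_matching_def\<close>)

lemma sum_matchings_split:
  assumes "finite S" and "e \<in> S"
  shows "(\<Sum>\<mu> | \<mu> \<subseteq> S \<and> is_matching \<mu>. g (V - \<Union>\<mu>))
    = (\<Sum>\<mu> | \<mu> \<subseteq> S - {e} \<and> is_matching \<mu>. g (V - \<Union>\<mu>))
    + (\<Sum>\<mu> | \<mu> \<subseteq> {f \<in> S - {e}. f \<inter> e = {}} \<and> is_matching \<mu>. g (V - e - \<Union>\<mu>))"
proof -
  define M1 where "M1 = {\<mu>. \<mu> \<subseteq> S - {e} \<and> is_matching \<mu>}"
  define M2 where "M2 = {\<mu>. \<mu> \<subseteq> {f \<in> S - {e}. f \<inter> e = {}} \<and> is_matching \<mu>}"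
  have "M1 \<subseteq> Pow S" "M2 \<subseteq> Pow S"
    by (auto simp: M1_def M2_def)
  then have "finite M1" "finite (insert e ` M2)"
    using assms(1) by (meson finite_Pow_iff finite_subset finite_imageI)+
  moreover have "M1 \<inter> insert e ` M2 = {}"
    by (auto simp: M1_def)
  ultimately have "(\<Sum>\<mu> | \<mu> \<subseteq> S \<and> is_matching \<mu>. g (V - \<Union>\<mu>))
      = (\<Sum>\<mu>\<in>M1. g (V - \<Union>\<mu>)) + (\<Sum>\<mu>\<in>insert e ` M2. g (V - \<Union>\<mu>))"
    unfolding matchings_split[OF assms(2)] M1_def[symmetric] M2_def[symmetric]
    by (rule sum.union_disjoint)
  also have "(\<Sum>\<mu>\<in>insert e ` M2. g (V - \<Union>\<mu>)) = (\<Sum>\<mu>\<in>M2. g (V - e - \<Union>\<mu>))"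
  proof -
    have "inj_on (insert e) M2"
      by (rule inj_onI) (auto simp: M2_def insert_ident)
    moreover have "V - \<Union>(insert e \<mu>) = V - e - \<Union>\<mu>" for \<mu>
      by auto
    ultimately show ?thesis
      by (simp add: sum.reindex)
  qed
  finally show ?thesis
    by (simp add: M1_def M2_def)
qed

lemma det_on_Lmat_delete_edges:
  fixes x :: "'a \<Rightarrow> 'r::comm_ring_1"
  assumes "simple_graph V S" and "S \<subseteq> E" and "\<nexists>cs. is_cycle E cs"
  shows "det_on V (Lmat (E - S) x)
    = (\<Sum>\<mu> | \<mu> \<subseteq> S \<and> is_matching \<mu>. det_on (V - \<Union>\<mu>) (Lmat E x))"
proof -
  have "finite S"
    using assms(1) by (rule simple_graph_finite_edges)
  then show ?thesis
    using assms
  proof (induction S arbitrary: V rule: finite_psubset_induct)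
    case (psubset S)
    show ?case
    proof (cases "S = {}")
      case True
      then have "{\<mu>. \<mu> \<subseteq> S \<and> is_matching \<mu>} = {{}}"
        by (auto simp: is_matching_def)
      with True show ?thesis
        by simp
    next
      case False
      then obtain e where e: "e \<in> S"
        by blast
      then obtain u v where e_uv: "e = {u, v}" "u \<noteq> v" "u \<in> V" "v \<in> V"
        using psubset.prems(1) unfolding simple_graph_def by blast
      define S' where "S' = S - {e}"
      define S'' where "S'' = {f \<in> S'. f \<inter> e = {}}"
      have "simple_graph V S'"
        using psubset.prems(1) by (auto simp: simple_graph_def S'_def)
      then have "simple_graph (V - e) S''"
        unfolding S''_def by (rule simple_graph_remove_vertices)
      have fin: "finite V"
        using psubset.prems(1) by (simp add: simple_graph_def)
      have acyclic': "\<nexists>cs. is_cycle (E - S') cs"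
        using psubset.prems(3) is_cycle_mono by blast
      have delete_e: "E - S = (E - S') - {e}" and e_edge: "e \<in> E - S'"
        using e psubset.prems(2) by (auto simp: S'_def)
      have "det_on V (Lmat (E - S) x)
          = det_on V (Lmat (E - S') x) + det_on (V - e) (Lmat (E - S') x)"
        unfolding delete_e
        using det_on_Lmat_delete_edge[OF fin acyclic' e_edge[unfolded e_uv(1)] e_uv(2-4)]
        by (simp only: e_uv(1))
      also have "det_on (V - e) (Lmat (E - S') x) = det_on (V - e) (Lmat (E - S'') x)"
        by (rule det_on_Lmat_cong) (auto simp: S''_def)
      also have "det_on V (Lmat (E - S') x)
          = (\<Sum>\<mu> | \<mu> \<subseteq> S' \<and> is_matching \<mu>. det_on (V - \<Union>\<mu>) (Lmat E x))"
        using \<open>simple_graph V S'\<close> psubset.prems(2,3) e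
        by (intro psubset.IH) (auto simp: S'_def)
      also have "det_on (V - e) (Lmat (E - S'') x)
          = (\<Sum>\<mu> | \<mu> \<subseteq> S'' \<and> is_matching \<mu>. det_on (V - e - \<Union>\<mu>) (Lmat E x))"
        using \<open>simple_graph (V - e) S''\<close> psubset.prems(2,3) e
        by (intro psubset.IH) (auto simp: S''_def S'_def)
      finally show ?thesis
        unfolding sum_matchings_split[OF psubset.hyps e, where g = "\<lambda>U. det_on U (Lmat E x)"]
          S''_def S'_def .
    qed
  qed
qed

theorem lemma3p4:
  fixes V :: "'a set" and E S :: "'a set set" and x :: "'a \<Rightarrow> 'r::comm_ring_1"
  assumes "is_tree V E" and "S \<subseteq> E"
  shows "dpoly V (E - S) x =
    (\<Sum>\<mu> \<in> {\<mu>. \<mu> \<subseteq> S \<and> is_matching \<mu>}.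
        dpoly (del_vertices_V V \<mu>) (del_vertices_E E \<mu>) x)"
proof -
  have "simple_graph V E" and acyclic: "\<nexists>cs. is_cycle E cs"
    using assms(1) by (auto simp: is_tree_def)
  then have "simple_graph V S"
    using assms(2) by (auto simp: simple_graph_def)
  have "dpoly (del_vertices_V V \<mu>) (del_vertices_E E \<mu>) x = det_on (V - \<Union>\<mu>) (Lmat E x)" for \<mu>
    unfolding dpoly_def del_vertices_V_def
    by (rule det_on_Lmat_cong) (auto simp: del_vertices_E_def)
  then show ?thesis
    unfolding dpoly_def[of V]
    using det_on_Lmat_delete_edges[OF \<open>simple_graph V S\<close> assms(2) acyclic] by simp
qed

end
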